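(* Let $0<b<1$, $\alpha\in(0,1]$ and $a=b^{\alpha}$. Every $I_0$-valued (discrete) semi-stable$(a,b)$ law is discrete semi-selfdecomposable$(b)$.
   Context: $I_0=\{0,1,2,\dots\}$. An $I_0$-valued random variable with probability generating function (PGF) $P(s)$ is discrete semi-stable$(a,b)$ if $P(s)\neq 0$ and $\{P(s)\}^a=P(1-b+bs)$ for all $0\le s\le 1$, where $0<b<1$ and $b=a^{1/\alpha}$ for some $\alpha\in(0,1]$. An $I_0$-valued random variable with PGF $P(s)$ is discrete semi-selfdecomposable$(b)$ ($0<b<1$) if there exists an infinitely divisible PGF $P_0(s)$ such that $P(s)=P(1-b+bs)\,P_0(s)$ for all $0\le s\le 1$. *)

theory Defs
  imports "HOL-Probability.Probability_Mass_Function"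
begin

text \<open>The law of an I0-valued random variable is a probability mass function on nat.
  Its probability generating function:\<close>
definition pgf :: "nat pmf \<Rightarrow> real \<Rightarrow> real" where
  "pgf p s = (\<Sum>n. pmf p n * s ^ n)"

definition inf_div_pgf :: "(real \<Rightarrow> real) \<Rightarrow> bool" where
  "inf_div_pgf P \<longleftrightarrow> (\<exists>q. \<forall>s\<in>{0..1}. P s = pgf q s) \<and>
     (\<forall>n::nat. n \<ge> 1 \<longrightarrow> (\<exists>r. \<forall>s\<in>{0..1}. (pgf r s) ^ n = P s))"

definition discrete_semi_stable :: "real \<Rightarrow> real \<Rightarrow> nat pmf \<Rightarrow> bool" where
  "discrete_semi_stable a b p \<longleftrightarrow>
     (\<forall>s\<in>{0..1}. pgf p s \<noteq> 0 \<and> (pgf p s) powr a = pgf p (1 - b + b * s))"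

definition discrete_semi_selfdecomposable :: "real \<Rightarrow> nat pmf \<Rightarrow> bool" where
  "discrete_semi_selfdecomposable b p \<longleftrightarrow>
     (\<exists>P0. inf_div_pgf P0 \<and> (\<forall>s\<in>{0..1}. pgf p s = pgf p (1 - b + b * s) * P0 s))"

end

theory Submission
  imports Defs "HOL-Library.Diagonal_Subsequence"
begin

text \<open>Semi-stability says \<open>P(1 - b + b s) = P(s)\<^sup>a\<close>, hence
  \<open>P(s) = P(1 - b + b s) \<cdot> P(s)\<^sup>1\<^sup>-\<^sup>a\<close>, and it suffices that \<open>P\<^sup>c\<close> is a PGF for every
  \<open>c \<ge> 0\<close>: then \<open>P\<^sup>1\<^sup>-\<^sup>a\<close> is infinitely divisible. The exponents \<open>c\<close> for which \<open>P\<^sup>c\<close>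
  is a PGF contain 0 and 1 and are closed under addition (independent sums), under
  multiplication by \<open>a\<close> (binomial thinning with parameter \<open>b\<close> turns \<open>P\<^sup>c\<close> into
  \<open>P\<^sup>c(1 - b + b s) = P\<^sup>a\<^sup>c\<close>) and under limits (the continuity theorem for PGFs, proved by
  Helly selection). So they contain every \<open>m a\<^sup>k\<close>, and these are dense in \<open>[0, \<infinity>)\<close>.\<close>

lemma pmf_nat_sums_1: "pmf (p :: nat pmf) sums 1"
  using sums_infsetsum_nat'[OF pmf_abs_summable[of p]] infsetsum_pmf_eq_1[of p UNIV] by simp

lemma summable_pmf_nat: "summable (pmf (p :: nat pmf))"
  using pmf_nat_sums_1 by (rule sums_summable)

lemma sum_pmf_lessThan_le_1: "(\<Sum>n<N. pmf (p :: nat pmf) n) \<le> 1"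
  using sum_le_suminf[OF summable_pmf_nat, of "{..<N}" p] pmf_nat_sums_1[of p]
  by (simp add: sums_iff)

lemma summable_pgf: "s \<in> {0..1} \<Longrightarrow> summable (\<lambda>n. pmf p n * s ^ n)"
  by (rule summable_comparison_test[OF _ summable_pmf_nat[of p]])
     (auto simp: abs_mult intro!: mult_left_le power_le_one)

lemma pgf_nonneg: "s \<in> {0..1} \<Longrightarrow> 0 \<le> pgf p s"
  unfolding pgf_def by (intro suminf_nonneg summable_pgf) auto

lemma pgf_1 [simp]: "pgf p 1 = 1"
  unfolding pgf_def using pmf_nat_sums_1[of p] by (simp add: sums_iff)

lemma pgf_return_pmf_0 [simp]: "pgf (return_pmf 0) s = 1"
proof -
  have "(\<lambda>n. pmf (return_pmf 0) n * s ^ n) = (\<lambda>n. if n = 0 then 1 else 0)"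
    by auto
  then show ?thesis
    unfolding pgf_def using sums_single[of 0 "\<lambda>_. 1::real"] by (simp add: sums_iff)
qed

lemma continuous_on_pgf: "continuous_on {0..1} (pgf p)"
proof -
  have "uniform_limit {0..1} (\<lambda>n s. \<Sum>i<n. pmf p i * s ^ i) (pgf p) sequentially"
    unfolding pgf_def[abs_def]
    by (rule Weierstrass_m_test[OF _ summable_pmf_nat[of p]])
       (auto simp: abs_mult intro!: mult_left_le power_le_one)
  moreover have "\<forall>\<^sub>F n in sequentially. continuous_on {0..1} (\<lambda>s. \<Sum>i<n. pmf p i * s ^ i)"
    by (intro always_eventually allI continuous_intros)
  ultimately show ?thesis
    by (intro uniform_limit_theorem) auto
qed

lemma ennreal_pgf:
  assumes "s \<in> {0..1}"
  shows "ennreal (pgf p s) = (\<integral>\<^sup>+ n. ennreal (s ^ n) \<partial>measure_pmf p)"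
proof -
  have "(\<integral>\<^sup>+ n. ennreal (s ^ n) \<partial>measure_pmf p) = (\<Sum>n. ennreal (pmf p n * s ^ n))"
    using assms by (simp add: nn_integral_measure_pmf ennreal_mult' nn_integral_count_space_nat)
  also have "\<dots> = ennreal (pgf p s)"
    unfolding pgf_def using assms by (intro suminf_ennreal2 summable_pgf) auto
  finally show ?thesis by simp
qed

lemma pgf_eqI:
  assumes "s \<in> {0..1}" "0 \<le> x" "ennreal x = (\<integral>\<^sup>+ n. ennreal (s ^ n) \<partial>measure_pmf p)"
  shows "pgf p s = x"
  using ennreal_pgf[OF assms(1), of p] assms(2,3) pgf_nonneg[OF assms(1), of p] ennreal_inj by metis

definition add_pmf :: "nat pmf \<Rightarrow> nat pmf \<Rightarrow> nat pmf" where
  "add_pmf p q = bind_pmf p (\<lambda>x. map_pmf ((+) x) q)"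

lemma pgf_add_pmf:
  assumes "s \<in> {0..1}"
  shows "pgf (add_pmf p q) s = pgf p s * pgf q s"
proof (rule pgf_eqI[OF assms])
  show "0 \<le> pgf p s * pgf q s"
    using assms by (simp add: pgf_nonneg)
  have "(\<integral>\<^sup>+ n. ennreal (s ^ n) \<partial>measure_pmf (add_pmf p q))
      = (\<integral>\<^sup>+ x. ennreal (s ^ x) * (\<integral>\<^sup>+ y. ennreal (s ^ y) \<partial>q) \<partial>p)"
    using assms by (simp add: add_pmf_def power_add ennreal_mult' nn_integral_cmult)
  also have "\<dots> = ennreal (pgf p s) * ennreal (pgf q s)"
    using assms by (simp add: nn_integral_multc ennreal_pgf)
  finally show
    "ennreal (pgf p s * pgf q s) = (\<integral>\<^sup>+ n. ennreal (s ^ n) \<partial>measure_pmf (add_pmf p q))"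
    using assms by (simp add: ennreal_mult' pgf_nonneg)
qed

lemma pgf_binomial_pmf:
  assumes "0 \<le> \<beta>" "\<beta> \<le> 1" "s \<in> {0..1}"
  shows "pgf (binomial_pmf n \<beta>) s = (1 - \<beta> + \<beta> * s) ^ n"
proof (rule pgf_eqI[OF assms(3)])
  show "0 \<le> (1 - \<beta> + \<beta> * s) ^ n"
    using assms by simp
  have "(\<integral>\<^sup>+ k. ennreal (s ^ k) \<partial>measure_pmf (binomial_pmf n \<beta>))
      = (\<Sum>k\<le>n. ennreal (s ^ k) * ennreal (pmf (binomial_pmf n \<beta>) k))"
    using assms by (intro nn_integral_measure_pmf_support)
      (auto simp: set_pmf_binomial_eq split: if_splits)
  also have "\<dots> = (\<Sum>k\<le>n. ennreal (real (n choose k) * (\<beta> * s) ^ k * (1 - \<beta>) ^ (n - k)))"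
    using assms by (intro sum.cong) (auto simp: ennreal_mult'[symmetric] power_mult_distrib mult_ac)
  also have "\<dots> = ennreal ((\<beta> * s + (1 - \<beta>)) ^ n)"
    using assms by (subst sum_ennreal) (auto simp: binomial_ring)
  finally show
    "ennreal ((1 - \<beta> + \<beta> * s) ^ n) = (\<integral>\<^sup>+ k. ennreal (s ^ k) \<partial>measure_pmf (binomial_pmf n \<beta>))"
    by (simp add: add.commute)
qed

text \<open>Binomial thinning \<open>\<beta> \<odot> X\<close> of Steutel and van Harn: each of the \<open>X\<close> units is kept
  independently with probability \<open>\<beta>\<close>.\<close>
definition thin_pmf :: "real \<Rightarrow> nat pmf \<Rightarrow> nat pmf" where
  "thin_pmf \<beta> q = bind_pmf q (\<lambda>n. binomial_pmf n \<beta>)"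

lemma pgf_thin_pmf:
  assumes "0 \<le> \<beta>" "\<beta> \<le> 1" "s \<in> {0..1}"
  shows "pgf (thin_pmf \<beta> q) s = pgf q (1 - \<beta> + \<beta> * s)"
proof (rule pgf_eqI[OF assms(3)])
  have t: "1 - \<beta> + \<beta> * s \<in> {0..1}"
    using assms by (auto simp: mult_left_le)
  then show "0 \<le> pgf q (1 - \<beta> + \<beta> * s)"
    by (rule pgf_nonneg)
  have "(\<integral>\<^sup>+ n. ennreal (s ^ n) \<partial>measure_pmf (thin_pmf \<beta> q))
      = (\<integral>\<^sup>+ n. ennreal (pgf (binomial_pmf n \<beta>) s) \<partial>q)"
    using assms by (simp add: thin_pmf_def ennreal_pgf)
  also have "\<dots> = ennreal (pgf q (1 - \<beta> + \<beta> * s))"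
    using assms by (simp add: pgf_binomial_pmf ennreal_pgf[OF t])
  finally show
    "ennreal (pgf q (1 - \<beta> + \<beta> * s)) = (\<integral>\<^sup>+ n. ennreal (s ^ n) \<partial>measure_pmf (thin_pmf \<beta> q))"
    by simp
qed

lemma pmf_convergent_subseq:
  fixes p :: "nat \<Rightarrow> nat pmf"
  obtains d c where "strict_mono d" "\<And>n. (\<lambda>k. pmf (p (d k)) n) \<longlonglongrightarrow> c n"
proof -
  let ?P = "\<lambda>n r. convergent (\<lambda>k. pmf (p (r k)) n)"
  interpret nat: subseqs ?P
  proof unfold_locales
    fix n :: nat and r :: "nat \<Rightarrow> nat"
    have "\<And>k. pmf (p (r k)) n \<in> {0..1}"
      by (simp add: pmf_le_1)
    then obtain l r' where "strict_mono r'" "((\<lambda>k. pmf (p (r k)) n) \<circ> r') \<longlonglongrightarrow> l"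
      using compact_Icc compact_imp_seq_compact seq_compactE by metis
    then show "\<exists>r'. strict_mono r' \<and> convergent (\<lambda>k. pmf (p ((r \<circ> r') k)) n)"
      by (auto simp: comp_def convergent_def)
  qed
  have "?P n nat.diagseq" for n
  proof -
    have "?P n (nat.diagseq \<circ> ((+) (Suc n)))"
      using convergent_subseq_convergent
        [OF nat.seqseq_holds[of n] nat.subseq_diagonal_rest[of "Suc n"]]
      unfolding nat.diagseq_seqseq by (simp add: comp_def)
    then obtain L where "(\<lambda>k. pmf (p (nat.diagseq (k + Suc n))) n) \<longlonglongrightarrow> L"
      by (auto simp: convergent_def add.commute)
    then have "(\<lambda>k. pmf (p (nat.diagseq k)) n) \<longlonglongrightarrow> L"
      by (rule LIMSEQ_offset)
    then show ?thesis
      by (auto simp: convergent_def)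
  qed
  then show ?thesis
    using nat.subseq_diagseq
    by (intro that[of nat.diagseq "\<lambda>n. lim (\<lambda>k. pmf (p (nat.diagseq k)) n)"])
      (auto simp: convergent_LIMSEQ_iff)
qed

lemma pmf_limit_subprob:
  fixes p :: "nat \<Rightarrow> nat pmf"
  assumes lim: "\<And>n. (\<lambda>k. pmf (p k) n) \<longlonglongrightarrow> c n"
  shows "0 \<le> c n" "summable c" "suminf c \<le> 1"
proof -
  show nonneg: "0 \<le> c n" for n
    by (rule LIMSEQ_le_const[OF lim]) auto
  have partial: "(\<Sum>n<N. c n) \<le> 1" for N
    by (rule LIMSEQ_le_const2[OF tendsto_sum[OF lim]]) (auto simp: sum_pmf_lessThan_le_1)
  then have "(\<Sum>k\<le>n. c k) \<le> 1" for n
    by (metis lessThan_Suc_atMost)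
  then show "summable c"
    using nonneg by (intro bounded_imp_summable)
  then show "suminf c \<le> 1"
    using partial by (intro suminf_le_const)
qed

lemma pgf_tendsto_of_pmf_tendsto:
  fixes p :: "nat \<Rightarrow> nat pmf"
  assumes lim: "\<And>n. (\<lambda>k. pmf (p k) n) \<longlonglongrightarrow> c n" and s: "s \<in> {0..<1}"
  shows "(\<lambda>k. pgf (p k) s) \<longlonglongrightarrow> (\<Sum>n. c n * s ^ n)"
proof -
  have "\<forall>\<^sub>F (n, k) in at_top \<times>\<^sub>F sequentially. norm (pmf (p k) n * s ^ n) \<le> s ^ n"
    using s by (intro always_eventually)
      (auto simp: abs_mult pmf_le_1 intro!: mult_left_le_one_le)
  moreover have "summable (\<lambda>n. s ^ n)"
    using s by (intro summable_geometric) auto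
  ultimately show ?thesis
    unfolding pgf_def using lim
    by (intro conjunct2[OF conjunct2[OF tannerys_theorem]] tendsto_intros) auto
qed

lemma pgf_pointwise_limit:
  fixes p :: "nat \<Rightarrow> nat pmf"
  assumes lim: "\<And>s. s \<in> {0..<1} \<Longrightarrow> (\<lambda>k. pgf (p k) s) \<longlonglongrightarrow> f s"
    and f_1: "f 1 = 1" and f_left_1: "(f \<longlongrightarrow> 1) (at_left 1)"
  shows "\<exists>q. \<forall>s\<in>{0..1}. pgf q s = f s"
proof -
  obtain d c where d: "strict_mono d" and c: "\<And>n. (\<lambda>k. pmf (p (d k)) n) \<longlonglongrightarrow> c n"
    using pmf_convergent_subseq[of p] by blast
  note c_nonneg = pmf_limit_subprob(1)[OF c] and c_summable = pmf_limit_subprob(2)[OF c]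
  have f_eq: "f s = (\<Sum>n. c n * s ^ n)" if s: "s \<in> {0..<1}" for s
  proof (rule LIMSEQ_unique)
    show "(\<lambda>k. pgf (p (d k)) s) \<longlonglongrightarrow> f s"
      using LIMSEQ_subseq_LIMSEQ[OF lim[OF s] d] by (simp add: comp_def)
  qed (rule pgf_tendsto_of_pmf_tendsto[OF c s])
  have "f s \<le> suminf c" if "s \<in> {0..<1}" for s
    unfolding f_eq[OF that] using that c_nonneg
    by (intro suminf_le summable_comparison_test[OF _ c_summable] c_summable)
       (auto simp: abs_mult intro!: mult_left_le power_le_one)
  \<comment> \<open>The behaviour of \<open>f\<close> near 1 is what prevents mass from escaping to infinity.\<close>
  then have "1 \<le> suminf c"
    by (intro tendsto_upperbound[OF f_left_1] eventually_at_leftI[of 0]) auto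
  then have c_sums: "c sums 1"
    using pmf_limit_subprob(3)[OF c] c_summable by (simp add: sums_iff)
  define q where "q = embed_pmf c"
  have "pmf q = c"
    using c_nonneg c_sums unfolding q_def
    by (intro ext pmf_embed_pmf)
      (auto simp: nn_integral_count_space_nat suminf_ennreal2 sums_iff)
  then have "pgf q s = f s" if "s \<in> {0..1}" for s
    using that f_eq[of s] f_1 c_sums by (cases "s = 1") (auto simp: pgf_def sums_iff)
  then show ?thesis by blast
qed

lemma closed_scaling_semigroup_contains_nonneg:
  fixes S :: "real set"
  assumes a: "0 < a" "a < 1"
    and S: "0 \<in> S" "1 \<in> S" "\<And>x y. x \<in> S \<Longrightarrow> y \<in> S \<Longrightarrow> x + y \<in> S"
      "\<And>x. x \<in> S \<Longrightarrow> a * x \<in> S"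
    and closed: "\<And>x c. (\<And>k. x k \<in> S) \<Longrightarrow> x \<longlonglongrightarrow> c \<Longrightarrow> c \<in> S"
  shows "{0..} \<subseteq> S"
proof
  fix c :: real assume "c \<in> {0..}"
  then have c: "0 \<le> c" by simp
  have pow: "a ^ k \<in> S" for k
    by (induction k) (use S in auto)
  have mult: "real m * a ^ k \<in> S" for m k
    by (induction m) (use S pow in \<open>auto simp: distrib_right\<close>)
  define x where "x k = real (nat \<lfloor>c / a ^ k\<rfloor>) * a ^ k" for k
  have x_bounds: "c - a ^ k \<le> x k \<and> x k \<le> c" for k
  proof -
    have "c / a ^ k \<le> real (nat \<lfloor>c / a ^ k\<rfloor>) + 1"
      "real (nat \<lfloor>c / a ^ k\<rfloor>) \<le> c / a ^ k"
      using c a by (linarith, simp)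
    then show ?thesis
      unfolding x_def using a by (simp add: pos_divide_le_eq pos_le_divide_eq distrib_right)
  qed
  have "(\<lambda>k. c - a ^ k) \<longlonglongrightarrow> c"
    using tendsto_diff[OF tendsto_const LIMSEQ_power_zero[of a], of c] a by simp
  then have "x \<longlonglongrightarrow> c"
    by (rule tendsto_sandwich[rotated 2, OF _ tendsto_const])
      (use x_bounds in \<open>auto intro: always_eventually\<close>)
  then show "c \<in> S"
    by (rule closed[rotated]) (simp add: x_def mult)
qed

definition pgf_power_exponents :: "nat pmf \<Rightarrow> real set" where
  "pgf_power_exponents p = {c. \<exists>q. \<forall>s\<in>{0..1}. pgf q s = pgf p s powr c}"

lemma one_in_pgf_power_exponents: "1 \<in> pgf_power_exponents p"
proof -
  have "\<forall>s\<in>{0..1}. pgf p s = pgf p s powr 1"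
    using pgf_nonneg by simp
  then show ?thesis
    unfolding pgf_power_exponents_def by blast
qed

lemma zero_in_pgf_power_exponents:
  assumes "\<forall>s\<in>{0..1}. pgf p s \<noteq> 0"
  shows "0 \<in> pgf_power_exponents p"
proof -
  have "\<forall>s\<in>{0..1}. pgf (return_pmf 0) s = pgf p s powr 0"
    using assms by simp
  then show ?thesis
    unfolding pgf_power_exponents_def by blast
qed

lemma add_in_pgf_power_exponents:
  assumes "x \<in> pgf_power_exponents p" "y \<in> pgf_power_exponents p"
  shows "x + y \<in> pgf_power_exponents p"
proof -
  obtain q r where "\<forall>s\<in>{0..1}. pgf q s = pgf p s powr x"
    and "\<forall>s\<in>{0..1}. pgf r s = pgf p s powr y"
    using assms unfolding pgf_power_exponents_def by blast
  then show ?thesis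
    unfolding pgf_power_exponents_def
    by (auto simp: pgf_add_pmf powr_add intro!: exI[of _ "add_pmf q r"])
qed

lemma semi_stable_mult_in_pgf_power_exponents:
  assumes "discrete_semi_stable a b p" "0 \<le> b" "b \<le> 1" "x \<in> pgf_power_exponents p"
  shows "a * x \<in> pgf_power_exponents p"
proof -
  obtain q where q: "\<forall>s\<in>{0..1}. pgf q s = pgf p s powr x"
    using assms(4) unfolding pgf_power_exponents_def by blast
  have "pgf (thin_pmf b q) s = pgf p s powr (a * x)" if s: "s \<in> {0..1}" for s
  proof -
    have "1 - b + b * s \<in> {0..1}"
      using assms(2,3) s by (auto simp: mult_left_le)
    then have "pgf (thin_pmf b q) s = pgf p (1 - b + b * s) powr x"
      using assms(2,3) s q by (simp add: pgf_thin_pmf)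
    also have "\<dots> = (pgf p s powr a) powr x"
      using assms(1) s unfolding discrete_semi_stable_def by simp
    also have "\<dots> = pgf p s powr (a * x)"
      by (rule powr_powr)
    finally show ?thesis .
  qed
  then show ?thesis
    unfolding pgf_power_exponents_def by blast
qed

lemma limit_in_pgf_power_exponents:
  assumes nonzero: "\<forall>s\<in>{0..1}. pgf p s \<noteq> 0"
    and x: "\<And>k. x k \<in> pgf_power_exponents p" and lim: "x \<longlonglongrightarrow> c"
  shows "c \<in> pgf_power_exponents p"
proof -
  have "\<forall>k. \<exists>q. \<forall>s\<in>{0..1}. pgf q s = pgf p s powr x k"
    using x unfolding pgf_power_exponents_def by blast
  then obtain q where q: "\<And>k. \<forall>s\<in>{0..1}. pgf (q k) s = pgf p s powr x k"
    by metis
  have "continuous_on {0..1} (\<lambda>s. pgf p s powr c)"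
    using nonzero by (intro continuous_on_powr continuous_on_pgf continuous_on_const)
  then have "((\<lambda>s. pgf p s powr c) \<longlongrightarrow> pgf p 1 powr c) (at 1 within {0..1})"
    by (rule continuous_on_def[THEN iffD1, rule_format]) simp
  then have left_1: "((\<lambda>s. pgf p s powr c) \<longlongrightarrow> 1) (at_left 1)"
    by (simp add: at_within_Icc_at_left)
  have "\<exists>r. \<forall>s\<in>{0..1}. pgf r s = pgf p s powr c"
  proof (rule pgf_pointwise_limit[of q, OF _ _ left_1])
    fix s :: real assume s: "s \<in> {0..<1}"
    have "(\<lambda>k. pgf p s powr x k) \<longlonglongrightarrow> pgf p s powr c"
      using nonzero s by (intro tendsto_powr tendsto_const lim) auto
    then show "(\<lambda>k. pgf (q k) s) \<longlonglongrightarrow> pgf p s powr c"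
      using q s by simp
  qed simp
  then show ?thesis
    unfolding pgf_power_exponents_def by simp
qed

lemma semi_stable_pgf_power_exponents:
  assumes "discrete_semi_stable a b p" "0 \<le> b" "b \<le> 1" "0 < a" "a < 1"
  shows "{0..} \<subseteq> pgf_power_exponents p"
proof (rule closed_scaling_semigroup_contains_nonneg[OF assms(4,5)])
  have nonzero: "\<forall>s\<in>{0..1}. pgf p s \<noteq> 0"
    using assms(1) unfolding discrete_semi_stable_def by blast
  then show "0 \<in> pgf_power_exponents p"
    by (rule zero_in_pgf_power_exponents)
  show "\<And>x c. (\<And>k. x k \<in> pgf_power_exponents p) \<Longrightarrow> x \<longlonglongrightarrow> c
      \<Longrightarrow> c \<in> pgf_power_exponents p"
    using nonzero by (rule limit_in_pgf_power_exponents)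
  show "\<And>x. x \<in> pgf_power_exponents p \<Longrightarrow> a * x \<in> pgf_power_exponents p"
    using assms(1-3) by (rule semi_stable_mult_in_pgf_power_exponents)
qed (simp_all add: one_in_pgf_power_exponents add_in_pgf_power_exponents)

lemma inf_div_pgf_powr:
  assumes "{0..} \<subseteq> pgf_power_exponents p" "0 \<le> c"
  shows "inf_div_pgf (\<lambda>s. pgf p s powr c)"
  unfolding inf_div_pgf_def
proof (intro conjI allI impI)
  obtain q where "\<forall>s\<in>{0..1}. pgf q s = pgf p s powr c"
    using assms unfolding pgf_power_exponents_def by auto
  then show "\<exists>q. \<forall>s\<in>{0..1}. pgf p s powr c = pgf q s"
    by (intro exI[of _ q]) simp
next
  fix n :: nat assume n: "1 \<le> n"
  have "c / n \<in> pgf_power_exponents p"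
    using assms by auto
  then obtain r where r: "\<forall>s\<in>{0..1}. pgf r s = pgf p s powr (c / n)"
    unfolding pgf_power_exponents_def by auto
  have "(pgf p s powr (c / n)) ^ n = pgf p s powr c" for s
    using n by (cases "pgf p s = 0") (auto simp: powr_power)
  then show "\<exists>r. \<forall>s\<in>{0..1}. pgf r s ^ n = pgf p s powr c"
    using r by (intro exI[of _ r]) simp
qed

theorem theorem2p3:
  fixes a b \<alpha> :: real and p :: "nat pmf"
  assumes "0 < b" "b < 1" "0 < \<alpha>" "\<alpha> \<le> 1" "a = b powr \<alpha>"
    and "discrete_semi_stable a b p"
  shows "discrete_semi_selfdecomposable b p"
proof -
  have a: "0 < a" "a < 1"
    using assms(1-3,5) powr_less_mono2[of \<alpha> b 1] by auto
  have "{0..} \<subseteq> pgf_power_exponents p"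
    using assms(1,2) a by (intro semi_stable_pgf_power_exponents[OF assms(6)]) auto
  then have "inf_div_pgf (\<lambda>s. pgf p s powr (1 - a))"
    using a by (intro inf_div_pgf_powr) auto
  moreover have "pgf p s = pgf p (1 - b + b * s) * pgf p s powr (1 - a)" if s: "s \<in> {0..1}" for s
  proof -
    have "pgf p s = pgf p s powr a * pgf p s powr (1 - a)"
      using pgf_nonneg[OF s, of p] by (simp add: powr_add[symmetric])
    also have "\<dots> = pgf p (1 - b + b * s) * pgf p s powr (1 - a)"
      using assms(6) s unfolding discrete_semi_stable_def by simp
    finally show ?thesis .
  qed
  ultimately show ?thesis
    unfolding discrete_semi_selfdecomposable_def by blast
qed

end
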